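(* Let $(\Omega,\preceq)$ be a pre-ordered set, let $n_1\ge 0$, and let $(t,c)$ and $(t',c')$ be two segments over $\Omega$ with domain $[n_1]$. If there exists a morphism $(t,c)\to(t',c')$ in $\mathbf{Seg}(\Omega\,|\,n_1)$, then it is the only morphism from $(t,c)$ to $(t',c')$ in $\mathbf{Seg}(\Omega)$.
   Context: For $n\ge 1$, $[n]=\{1,\dots,n\}$ with its usual order, and $[0]=\emptyset$. A segment over a pre-ordered set $(\Omega,\preceq)$ is a pair $(t,c)$ where $t:[n_1]\to[n_0]$ is an order-preserving surjection and $c:[n_0]\to\Omega$ is a function; $[n_1]$ is its domain. A morphism of segments $(t,c)\to(t',c')$ (with $t':[n_1']\to[n_0']$, $c':[n_0']\to\Omega$) is a pair $(f_1,f_0)$ with $f_1:[n_1]\to[n_1']$ an order-preserving injection and $f_0:[n_0]\to[n_0']$ order-preserving, such that $t'\circ f_1=f_0\circ t$ and $c'(f_0(i))\preceq c(i)$ for all $i\in[n_0]$; composition is componentwise. This gives the category $\mathbf{Seg}(\Omega)$. The subcategory $\mathbf{Seg}(\Omega\,|\,n_1)$ has as objects the segments with domain $[n_1]$ and as morphisms those morphisms $(f_1,f_0)$ with $f_1=\mathrm{id}_{[n_1]}$. *)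

theory Defs
  imports Main
begin

text \<open>The ordinal [n] = {1..n} (so [0] is empty). A segment over a pre-ordered set
 (Omega, le) is given by n1, n0, an order-preserving surjection t : [n1] -> [n0]
 and a function c : [n0] -> Omega. Functions are HOL functions; only their values on
 the relevant finite domains matter.\<close>

definition is_segment :: "nat \<Rightarrow> nat \<Rightarrow> (nat \<Rightarrow> nat) \<Rightarrow> bool" where
  "is_segment n1 n0 t \<longleftrightarrow>
     (\<forall>i\<in>{1..n1}. \<forall>j\<in>{1..n1}. i \<le> j \<longrightarrow> t i \<le> t j) \<and>
     t ` {1..n1} = {1..n0}"

definition seg_mor ::
  "('a \<Rightarrow> 'a \<Rightarrow> bool) \<Rightarrow>
   nat \<Rightarrow> nat \<Rightarrow> (nat \<Rightarrow> nat) \<Rightarrow> (nat \<Rightarrow> 'a) \<Rightarrow>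
   nat \<Rightarrow> nat \<Rightarrow> (nat \<Rightarrow> nat) \<Rightarrow> (nat \<Rightarrow> 'a) \<Rightarrow>
   (nat \<Rightarrow> nat) \<Rightarrow> (nat \<Rightarrow> nat) \<Rightarrow> bool" where
  "seg_mor le n1 n0 t c n1' n0' t' c' f1 f0 \<longleftrightarrow>
     f1 ` {1..n1} \<subseteq> {1..n1'} \<and>
     (\<forall>i\<in>{1..n1}. \<forall>j\<in>{1..n1}. i \<le> j \<longrightarrow> f1 i \<le> f1 j) \<and>
     inj_on f1 {1..n1} \<and>
     f0 ` {1..n0} \<subseteq> {1..n0'} \<and>
     (\<forall>i\<in>{1..n0}. \<forall>j\<in>{1..n0}. i \<le> j \<longrightarrow> f0 i \<le> f0 j) \<and>
     (\<forall>i\<in>{1..n1}. t' (f1 i) = f0 (t i)) \<and>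
     (\<forall>i\<in>{1..n0}. le (c' (f0 i)) (c i))"

definition seg_mor_fixed ::
  "('a \<Rightarrow> 'a \<Rightarrow> bool) \<Rightarrow> nat \<Rightarrow>
   nat \<Rightarrow> (nat \<Rightarrow> nat) \<Rightarrow> (nat \<Rightarrow> 'a) \<Rightarrow>
   nat \<Rightarrow> (nat \<Rightarrow> nat) \<Rightarrow> (nat \<Rightarrow> 'a) \<Rightarrow>
   (nat \<Rightarrow> nat) \<Rightarrow> (nat \<Rightarrow> nat) \<Rightarrow> bool" where
  "seg_mor_fixed le n1 n0 t c n0' t' c' f1 f0 \<longleftrightarrow>
     seg_mor le n1 n0 t c n1 n0' t' c' f1 f0 \<and> (\<forall>i\<in>{1..n1}. f1 i = i)"

end

theory Submission
  imports Defs
begin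

text \<open>An order-preserving injection of [n] into itself is the identity, so the first
 component of any morphism between segments with the same domain is the identity. The second
 component is then determined on [n0] by t' (f1 i) = f0 (t i), because t is surjective.\<close>

lemma mono_inj_on_self_atLeastAtMost_eq_id:
  fixes g :: "nat \<Rightarrow> nat"
  assumes img: "g ` {1..n} \<subseteq> {1..n}"
    and mono: "\<forall>i\<in>{1..n}. \<forall>j\<in>{1..n}. i \<le> j \<longrightarrow> g i \<le> g j"
    and inj: "inj_on g {1..n}"
    and i: "i \<in> {1..n}"
  shows "g i = i"
proof (rule antisym)
  \<comment> \<open>g injects {i..n} into {g i..n} and {1..i} into {1..g i}; compare cardinalities.\<close>
  have g_in: "g j \<in> {1..n}" if "j \<in> {1..n}" for j
    using img that by blast
  have g_mono: "g j \<le> g k" if "j \<in> {1..n}" "k \<in> {1..n}" "j \<le> k" for j k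
    using mono that by blast
  have "g ` {i..n} \<subseteq> {g i..n}"
    using i g_in g_mono by (intro image_subsetI) (simp add: atLeastAtMost_iff)
  moreover have "inj_on g {i..n}"
    using i by (intro inj_on_subset[OF inj]) simp
  ultimately have "card {i..n} \<le> card {g i..n}"
    by (intro card_inj_on_le) simp_all
  then show "g i \<le> i"
    using i g_in[OF i] by (simp; linarith)
  have "g ` {1..i} \<subseteq> {1..g i}"
    using i g_in g_mono by (intro image_subsetI) (simp add: atLeastAtMost_iff)
  moreover have "inj_on g {1..i}"
    using i by (intro inj_on_subset[OF inj]) simp
  ultimately have "card {1..i} \<le> card {1..g i}"
    by (intro card_inj_on_le) simp_all
  then show "i \<le> g i"
    by simp
qed

lemma seg_mor_same_domain_fst_eq_id:
  assumes "seg_mor le n1 n0 t c n1 n0' t' c' g1 g0"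
    and "i \<in> {1..n1}"
  shows "g1 i = i"
  using assms mono_inj_on_self_atLeastAtMost_eq_id[of g1 n1 i]
  unfolding seg_mor_def by simp

lemma seg_mor_snd_determined_by_fst:
  assumes "is_segment n1 n0 t"
    and "seg_mor le n1 n0 t c n1' n0' t' c' f1 f0"
    and "seg_mor le n1 n0 t c n1' n0' t' c' g1 g0"
    and "\<forall>i\<in>{1..n1}. g1 i = f1 i"
    and "j \<in> {1..n0}"
  shows "g0 j = f0 j"
proof -
  obtain i where i: "i \<in> {1..n1}" and j: "j = t i"
    using assms(1,5) unfolding is_segment_def by blast
  have "g0 (t i) = t' (g1 i)" "f0 (t i) = t' (f1 i)"
    using assms(2,3) i unfolding seg_mor_def by auto
  then show ?thesis
    using assms(4) i j by simp
qed

theorem mainTheorem1: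
  fixes le :: "'a \<Rightarrow> 'a \<Rightarrow> bool"
    and n1 n0 n0' :: nat
    and t t' :: "nat \<Rightarrow> nat"
    and c c' :: "nat \<Rightarrow> 'a"
    and f1 f0 :: "nat \<Rightarrow> nat"
  assumes "reflp le" and "transp le"
    and "is_segment n1 n0 t"
    and "is_segment n1 n0' t'"
    and "seg_mor_fixed le n1 n0 t c n0' t' c' f1 f0"
  shows "\<forall>g1 g0. seg_mor le n1 n0 t c n1 n0' t' c' g1 g0 \<longrightarrow>
           (\<forall>i\<in>{1..n1}. g1 i = f1 i) \<and> (\<forall>i\<in>{1..n0}. g0 i = f0 i)"
proof (intro allI impI)
  fix g1 g0
  assume g: "seg_mor le n1 n0 t c n1 n0' t' c' g1 g0"
  have f: "seg_mor le n1 n0 t c n1 n0' t' c' f1 f0" and f1: "\<forall>i\<in>{1..n1}. f1 i = i"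
    using assms(5) unfolding seg_mor_fixed_def by auto
  have fst_eq: "\<forall>i\<in>{1..n1}. g1 i = f1 i"
    using f1 seg_mor_same_domain_fst_eq_id[OF g] by simp
  moreover have "\<forall>j\<in>{1..n0}. g0 j = f0 j"
    using seg_mor_snd_determined_by_fst[OF assms(3) f g fst_eq] by blast
  ultimately show "(\<forall>i\<in>{1..n1}. g1 i = f1 i) \<and> (\<forall>i\<in>{1..n0}. g0 i = f0 i)" ..
qed

end
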